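(* Let $\alpha \in \mathbb{R}$ be such that $\alpha/(2\pi)$ is an algebraic irrational number. For $\phi \in \mathbb{R}$ and $\epsilon>0$ define the gate complexity of $e^{i\phi}\in U(1)$ with respect to the single gate $e^{i\alpha}$ by $$C_\epsilon(\phi) = \min\{|n| : n \in \mathbb{Z},\ |e^{i\phi}-e^{in\alpha}|<\epsilon\}.$$ Then for every $\phi \in [0,2\pi)$ and every $\delta>0$ there exists $\phi'$ with $|\phi'-\phi|<\delta$ such that $$\log C_\epsilon(\phi') > \frac{1}{3}\log\left(\frac{1}{\epsilon}\right) + \mathcal{O}(\epsilon^0) \quad \text{as } \epsilon \to 0,$$ i.e. there is a constant $c$ (depending on $\alpha$ and $\phi'$) such that $\log C_\epsilon(\phi') > \frac13 \log(1/\epsilon) + c$ for all sufficiently small $\epsilon>0$.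
   Context: Since $\alpha/\pi$ is irrational, the set $\{e^{in\alpha}: n\in\mathbb{Z}\}$ is dense in $U(1)$, so $C_\epsilon(\phi)$ is finite for every $\epsilon>0$. *)

theory Defs
  imports "HOL-Analysis.Analysis" "HOL-Computational_Algebra.Polynomial"
begin

definition gate_complexity :: "real \<Rightarrow> real \<Rightarrow> real \<Rightarrow> nat" where
  "gate_complexity \<alpha> \<epsilon> \<phi> =
     (LEAST k::nat. \<exists>n::int. nat \<bar>n\<bar> = k \<and>
        cmod (cis \<phi> - cis (real_of_int n * \<alpha>)) < \<epsilon>)"

end

theory Submission
  imports Defs
begin

text \<open>For every real \<alpha>, most phases are badly approximable by the multiples n\<alpha> modulo 2\<pi>.
  Inside an interval of length at most one, the phases x with |e^(ix) - e^(in\<alpha>)| < K/(|n|+1)^3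
  lie in a single interval of length 6K/(|n|+1)^3. These lengths are summable, so for small K
  they cannot cover an interval around \<phi>, and a phase \<phi>' they miss satisfies
  |e^(i\<phi>') - e^(in\<alpha>)| \<ge> K/(|n|+1)^3 for all n. An n realising C_\<epsilon>(\<phi>') therefore has
  (|n|+1)^3 > K/\<epsilon>, which gives the bound with c = ln(K/8)/3. Irrationality of \<alpha>/2\<pi> is used
  only through Kronecker's theorem, which makes C_\<epsilon> well defined.\<close>

lemma cis_add_2pi_multiple: "cis (x + 2 * pi * of_int k) = cis x"
  by (simp add: cis_mult [symmetric])

lemma norm_cis_diff: "cmod (cis x - cis y) = 2 * \<bar>sin ((x - y) / 2)\<bar>"
proof -
  have "cis x = cis y * cis (x - y)"
    by (simp add: cis_mult)
  then have "cis x - cis y = cis y * (cis (x - y) - 1)"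
    by (simp add: algebra_simps)
  then have "(cmod (cis x - cis y))\<^sup>2 = (cos (x - y) - 1)\<^sup>2 + (sin (x - y))\<^sup>2"
    by (simp add: norm_mult cmod_power2)
  also have "\<dots> = 2 - 2 * cos (x - y)"
    using sin_cos_squared_add [of "x - y"] by (simp add: power2_diff)
  also have "\<dots> = (2 * \<bar>sin ((x - y) / 2)\<bar>)\<^sup>2"
    using cos_double_sin [of "(x - y) / 2", unfolded mult_2 field_sum_of_halves]
    by (simp add: power_mult_distrib)
  finally show ?thesis
    by (rule power2_eq_imp_eq) auto
qed

lemma norm_cis_diff_le: "cmod (cis x - cis y) \<le> \<bar>x - y\<bar>"
  using abs_sin_x_le_abs_x [of "(x - y) / 2"] by (simp add: norm_cis_diff)

lemma abs_sin_ge_third: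
  fixes u :: real
  assumes "\<bar>u\<bar> \<le> pi / 2"
  shows "\<bar>u\<bar> / 3 \<le> \<bar>sin u\<bar>"
proof -
  define w where "w = \<bar>u\<bar>"
  have w: "0 \<le> w" "w \<le> 2"
    using assms pi_less_4 by (auto simp: w_def)
  have "\<bar>sin w - w\<bar> \<le> w ^ 3 / 6"
    using Maclaurin_sin_bound [of w 3] w by (simp add: sin_coeff_def numeral_3_eq_3)
  moreover have "w ^ 3 \<le> 4 * w"
  proof -
    have "w\<^sup>2 \<le> 2\<^sup>2"
      using w by (intro power_mono) auto
    then show ?thesis
      using w by (simp add: power3_eq_cube power2_eq_square mult_right_mono)
  qed
  ultimately have "w / 3 \<le> sin w"
    unfolding abs_le_iff by linarith
  moreover have "\<bar>sin u\<bar> = \<bar>sin w\<bar>"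
    by (simp add: w_def abs_if)
  ultimately show ?thesis
    by (simp add: w_def)
qed

lemma norm_cis_diff_less_imp_close_mod_2pi:
  assumes "cmod (cis x - cis y) < r"
  obtains k :: int where "\<bar>x - y - 2 * pi * of_int k\<bar> < 3 * r"
proof -
  define q where "q = (x - y) / (2 * pi)"
  define k where "k = round q"
  define t where "t = x - y - 2 * pi * of_int k"
  have "t = 2 * pi * (q - of_int k)"
    by (simp add: t_def q_def field_simps)
  then have "\<bar>t\<bar> = 2 * pi * \<bar>q - of_int k\<bar>"
    by (simp add: abs_mult)
  also have "\<dots> \<le> 2 * pi * (1 / 2)"
    using of_int_round_abs_le [of q] by (intro mult_left_mono) (auto simp: k_def abs_minus_commute)
  finally have "\<bar>t / 2\<bar> \<le> pi / 2"
    by simp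
  then have "\<bar>t\<bar> / 6 \<le> \<bar>sin (t / 2)\<bar>"
    using abs_sin_ge_third by fastforce
  moreover have "cis x = cis (y + t)"
    using cis_add_2pi_multiple [of "y + t" k] by (simp add: t_def)
  ultimately have "\<bar>t\<bar> < 3 * r"
    using assms norm_cis_diff [of "y + t" y] by simp
  then show ?thesis
    using that t_def by blast
qed

lemma near_phases_in_ball:
  assumes "b - a \<le> 1" "r \<le> 1 / 2"
  obtains c where "{x \<in> {a..b}. cmod (cis x - cis y) < r} \<subseteq> ball c (3 * r)"
proof (cases "{x \<in> {a..b}. cmod (cis x - cis y) < r} = {}")
  case False
  then obtain x0 where x0: "x0 \<in> {a..b}" "cmod (cis x0 - cis y) < r"
    by auto
  obtain k0 :: int where k0: "\<bar>x0 - y - 2 * pi * of_int k0\<bar> < 3 * r"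
    using x0(2) by (rule norm_cis_diff_less_imp_close_mod_2pi)
  have "x \<in> ball (y + 2 * pi * of_int k0) (3 * r)"
    if x: "x \<in> {a..b}" "cmod (cis x - cis y) < r" for x
  proof -
    obtain k :: int where k: "\<bar>x - y - 2 * pi * of_int k\<bar> < 3 * r"
      using x(2) by (rule norm_cis_diff_less_imp_close_mod_2pi)
    have "2 * pi * (of_int k - of_int k0) = (x - x0) - (x - y - 2 * pi * of_int k) + (x0 - y - 2 * pi * of_int k0)"
      by (simp add: algebra_simps)
    then have "\<bar>2 * pi * (of_int k - of_int k0)\<bar> < 2 * pi * 1"
      using k k0 x x0 assms pi_gt3 by auto
    then have "k = k0"
      by (simp add: abs_mult)
    then show ?thesis
      using k by (simp add: dist_real_def abs_minus_commute algebra_simps)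
  qed
  then show ?thesis
    using that by blast
qed (use that in blast)

lemma exists_not_in_Union_if_suminf_emeasure_less:
  assumes "range B \<subseteq> sets M" "(\<Sum>m. emeasure M (B m)) < emeasure M A"
  shows "\<exists>x\<in>A. \<forall>m. x \<notin> B m"
proof (rule ccontr)
  assume "\<not> ?thesis"
  then have "emeasure M A \<le> emeasure M (\<Union>m. B m)"
    using assms(1) by (intro emeasure_mono) auto
  also have "\<dots> \<le> (\<Sum>m. emeasure M (B m))"
    using assms(1) by (intro emeasure_subadditive_countably) auto
  finally show False
    using assms(2) by simp
qed

lemma summable_inverse_Suc_power:
  assumes "p \<ge> 2"
  shows "summable (\<lambda>m::nat. 1 / (real m + 1) ^ p)"
proof -
  have "summable (\<lambda>m. inverse (real m ^ p))"
    using assms by (rule inverse_power_summable)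
  then have "summable (\<lambda>m. inverse (real (Suc m) ^ p))"
    by (subst summable_Suc_iff)
  then show ?thesis
    by (simp add: inverse_eq_divide add.commute)
qed

lemma interval_not_covered_by_balls:
  fixes c :: "int \<Rightarrow> real" and \<rho> :: "nat \<Rightarrow> real"
  assumes "\<rho> sums s" "\<And>m. 0 \<le> \<rho> m" "4 * s < b - a"
  shows "\<exists>x\<in>{a..b}. \<forall>n. x \<notin> ball (c n) (\<rho> (nat \<bar>n\<bar>))"
proof -
  define B where "B m = ball (c (int m)) (\<rho> m) \<union> ball (c (- int m)) (\<rho> m)" for m
  have "emeasure lborel (B m) \<le> ennreal (4 * \<rho> m)" for m
  proof -
    have "emeasure lborel (B m)
        \<le> emeasure lborel (ball (c (int m)) (\<rho> m)) + emeasure lborel (ball (c (- int m)) (\<rho> m))"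
      unfolding B_def by (rule emeasure_subadditive) auto
    also have "\<dots> = ennreal (4 * \<rho> m)"
      using assms(2) [of m] by (simp add: ball_eq_greaterThanLessThan flip: ennreal_plus)
    finally show ?thesis .
  qed
  then have "(\<Sum>m. emeasure lborel (B m)) \<le> (\<Sum>m. ennreal (4 * \<rho> m))"
    by (intro suminf_le) auto
  also have "\<dots> = ennreal (4 * s)"
    using assms(1,2) by (intro suminf_ennreal_eq sums_mult) auto
  also have "\<dots> < emeasure lborel {a..b}"
  proof -
    have "0 \<le> s"
      using assms(1,2) by (metis sums_iff suminf_nonneg)
    then show ?thesis
      using assms(3) by (simp add: ennreal_lessI)
  qed
  finally have "\<exists>x\<in>{a..b}. \<forall>m. x \<notin> B m"
    by (intro exists_not_in_Union_if_suminf_emeasure_less) (auto simp: B_def)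
  then obtain x where x: "x \<in> {a..b}" "\<And>m. x \<notin> B m"
    by blast
  have "x \<notin> ball (c n) (\<rho> (nat \<bar>n\<bar>))" for n
  proof (cases "n \<ge> 0")
    case True
    then show ?thesis
      using x(2) [of "nat n"] by (simp add: B_def)
  next
    case False
    then show ?thesis
      using x(2) [of "nat (- n)"] by (simp add: B_def)
  qed
  with x(1) show ?thesis
    by blast
qed

lemma exists_badly_approximable_phase:
  fixes \<alpha> a b :: real and p :: nat
  assumes "a < b" "b - a \<le> 1" "p \<ge> 2"
  obtains x K where "x \<in> {a..b}" "K > 0"
    "\<And>n::int. K / (\<bar>of_int n\<bar> + 1) ^ p \<le> cmod (cis x - cis (of_int n * \<alpha>))"
proof -
  define f where "f m = 1 / (real m + 1) ^ p" for m :: nat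
  have f: "0 \<le> f m" "f m \<le> 1" for m
    by (auto simp: f_def)
  have f_sums: "f sums suminf f"
    unfolding f_def using summable_inverse_Suc_power [OF assms(3)] by (rule summable_sums)
  have "0 \<le> suminf f"
    using f_sums f by (intro suminf_nonneg) (auto simp: sums_iff)
  define K where "K = (b - a) / (12 * suminf f + 24)"
    \<comment> \<open>the summand 24 keeps \<open>K \<le> 1/2\<close>, as \<open>near_phases_in_ball\<close> requires\<close>
  have K: "0 < K" "K \<le> 1 / 2" "4 * (3 * K * suminf f) < b - a"
    using assms \<open>0 \<le> suminf f\<close> by (auto simp: K_def field_simps)
  define r where "r n = K * f (nat \<bar>n\<bar>)" for n :: int
  have r_le: "r n \<le> 1 / 2" for n
    using K f [of "nat \<bar>n\<bar>"] mult_mono [of K "1 / 2" "f (nat \<bar>n\<bar>)" 1] by (simp add: r_def)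
  have "\<forall>n. \<exists>c. {x \<in> {a..b}. cmod (cis x - cis (of_int n * \<alpha>)) < r n} \<subseteq> ball c (3 * r n)"
    using near_phases_in_ball [OF assms(2) r_le] by metis
  then obtain c
    where c: "\<And>n. {x \<in> {a..b}. cmod (cis x - cis (of_int n * \<alpha>)) < r n} \<subseteq> ball (c n) (3 * r n)"
    by metis
  have "(\<lambda>m. 3 * K * f m) sums (3 * K * suminf f)"
    using f_sums by (rule sums_mult)
  then have "\<exists>x\<in>{a..b}. \<forall>n. x \<notin> ball (c n) (3 * K * f (nat \<bar>n\<bar>))"
    using interval_not_covered_by_balls [where \<rho> = "\<lambda>m. 3 * K * f m" and a = a and b = b and c = c] K f
    by simp
  then obtain x where x: "x \<in> {a..b}" "\<And>n. x \<notin> ball (c n) (3 * K * f (nat \<bar>n\<bar>))"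
    by blast
  have "r n \<le> cmod (cis x - cis (of_int n * \<alpha>))" for n
  proof (rule ccontr)
    assume "\<not> ?thesis"
    then have "x \<in> ball (c n) (3 * r n)"
      using c [of n] x(1) by auto
    then show False
      using x(2) [of n] by (simp add: r_def mult.assoc)
  qed
  then show ?thesis
    using that x(1) K(1) by (simp add: r_def f_def)
qed

lemma exists_cis_multiple_close:
  assumes "\<alpha> / (2 * pi) \<notin> \<rat>" "\<epsilon> > 0"
  obtains n :: int where "cmod (cis x - cis (of_int n * \<alpha>)) < \<epsilon>"
proof -
  have "\<epsilon> / (2 * pi) > 0"
    using assms(2) by simp
  then obtain h k :: int where "k > 0"
    and hk: "\<bar>of_int k * (\<alpha> / (2 * pi)) - of_int h - x / (2 * pi)\<bar> < \<epsilon> / (2 * pi)"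
    by (rule sequence_of_fractional_parts_is_dense [OF assms(1)])
  define y where "y = of_int k * \<alpha> - 2 * pi * of_int h"
  have "y - x = 2 * pi * (of_int k * (\<alpha> / (2 * pi)) - of_int h - x / (2 * pi))"
    by (simp add: y_def field_simps)
  then have "\<bar>x - y\<bar> = 2 * pi * \<bar>of_int k * (\<alpha> / (2 * pi)) - of_int h - x / (2 * pi)\<bar>"
    by (simp add: abs_minus_commute [of x] abs_mult)
  also have "\<dots> < 2 * pi * (\<epsilon> / (2 * pi))"
    using hk by (intro mult_strict_left_mono) auto
  finally have "\<bar>x - y\<bar> < \<epsilon>"
    by simp
  moreover have "cis (of_int k * \<alpha>) = cis y"
    using cis_add_2pi_multiple [of y h] by (simp add: y_def)
  ultimately have "cmod (cis x - cis (of_int k * \<alpha>)) < \<epsilon>"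
    using norm_cis_diff_le [of x y] by simp
  then show ?thesis
    by (rule that)
qed

lemma gate_complexity_attained:
  assumes "\<alpha> / (2 * pi) \<notin> \<rat>" "\<epsilon> > 0"
  obtains n :: int where "nat \<bar>n\<bar> = gate_complexity \<alpha> \<epsilon> x"
    "cmod (cis x - cis (of_int n * \<alpha>)) < \<epsilon>"
proof -
  obtain n0 :: int where "cmod (cis x - cis (of_int n0 * \<alpha>)) < \<epsilon>"
    using assms by (rule exists_cis_multiple_close)
  then have "\<exists>k n. nat \<bar>n\<bar> = k \<and> cmod (cis x - cis (of_int n * \<alpha>)) < \<epsilon>"
    by blast
  from LeastI_ex [OF this] obtain n :: int
    where "nat \<bar>n\<bar> = (LEAST k. \<exists>n. nat \<bar>n\<bar> = k \<and> cmod (cis x - cis (of_int n * \<alpha>)) < \<epsilon>)"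
      and "cmod (cis x - cis (of_int n * \<alpha>)) < \<epsilon>"
    by blast
  then show ?thesis
    using that unfolding gate_complexity_def by blast
qed

lemma ln_gt_if_inverse_power_less:
  fixes y K \<epsilon> :: real and p :: nat
  assumes "p > 0" "0 < \<epsilon>" "\<epsilon> < K / 2 ^ p" "0 \<le> y" "K / (y + 1) ^ p < \<epsilon>"
  shows "ln (1 / \<epsilon>) / real p + ln (K / 2 ^ p) / real p < ln y"
proof -
  have K: "K / \<epsilon> < (y + 1) ^ p"
    using assms(2,4,5) by (simp add: field_simps)
  moreover have "2 ^ p < K / \<epsilon>"
    using assms(2,3) by (simp add: field_simps)
  ultimately have "1 < y"
    using power_less_imp_less_base [of 2 p "y + 1"] assms(4) by simp
  have "(y + 1) ^ p \<le> (2 * y) ^ p"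
    using \<open>1 < y\<close> by (intro power_mono) auto
  with K have "K / \<epsilon> < 2 ^ p * y ^ p"
    by (simp add: power_mult_distrib)
  then have "K / 2 ^ p / \<epsilon> < y ^ p"
    using assms(2) by (simp add: field_simps)
  moreover have K_pos: "0 < K / 2 ^ p"
    using assms(2,3) by linarith
  ultimately have "ln (K / 2 ^ p / \<epsilon>) < ln (y ^ p)"
    using divide_pos_pos [OF K_pos assms(2)] \<open>1 < y\<close> by (intro ln_less_cancel_iff [THEN iffD2]) auto
  moreover have "ln (K / 2 ^ p / \<epsilon>) = ln (K / 2 ^ p) + ln (1 / \<epsilon>)"
    using ln_div [of "K / 2 ^ p" \<epsilon>] ln_div [of 1 \<epsilon>] K_pos assms(2) by (cases "K = 0") simp_all
  moreover have "ln (y ^ p) = real p * ln y"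
    using \<open>1 < y\<close> by (simp add: ln_realpow)
  ultimately show ?thesis
    using assms(1) by (simp add: field_simps)
qed

lemma ln_gate_complexity_lower_bound:
  fixes \<alpha> x K :: real and p :: nat
  assumes "\<alpha> / (2 * pi) \<notin> \<rat>" "p > 0" "K > 0"
    and badly_approximable: "\<And>n::int. K / (\<bar>of_int n\<bar> + 1) ^ p \<le> cmod (cis x - cis (of_int n * \<alpha>))"
  shows "\<forall>\<^sub>F \<epsilon> in at_right 0.
           ln (1 / \<epsilon>) / real p + ln (K / 2 ^ p) / real p < ln (real (gate_complexity \<alpha> \<epsilon> x))"
  unfolding eventually_at_right_field
proof (intro exI conjI allI impI)
  show "0 < K / 2 ^ p"
    using assms(3) by simp
  fix \<epsilon> :: real
  assume \<epsilon>: "0 < \<epsilon>" "\<epsilon> < K / 2 ^ p"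
  then obtain n :: int where n: "nat \<bar>n\<bar> = gate_complexity \<alpha> \<epsilon> x"
    "cmod (cis x - cis (of_int n * \<alpha>)) < \<epsilon>"
    using assms(1) by (blast intro: gate_complexity_attained)
  then have "real (gate_complexity \<alpha> \<epsilon> x) = \<bar>of_int n\<bar>"
    by (metis of_int_abs of_int_of_nat_eq abs_ge_zero nat_0_le)
  then have "K / (real (gate_complexity \<alpha> \<epsilon> x) + 1) ^ p < \<epsilon>"
    using badly_approximable [of n] n(2) by simp
  then show "ln (1 / \<epsilon>) / real p + ln (K / 2 ^ p) / real p < ln (real (gate_complexity \<alpha> \<epsilon> x))"
    using assms(2) \<epsilon> by (intro ln_gt_if_inverse_power_less) auto
qed

theorem proposition1:
  fixes \<alpha> :: real
  assumes "algebraic (\<alpha> / (2 * pi))"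
    and "\<alpha> / (2 * pi) \<notin> \<rat>"
  shows "\<forall>\<phi> \<in> {0..<2 * pi}. \<forall>\<delta> > 0. \<exists>\<phi>'. \<bar>\<phi>' - \<phi>\<bar> < \<delta> \<and>
           (\<exists>c::real. \<forall>\<^sub>F \<epsilon> in at_right 0.
              ln (real (gate_complexity \<alpha> \<epsilon> \<phi>')) > ln (1 / \<epsilon>) / 3 + c)"
proof (intro ballI allI impI)
  fix \<phi> \<delta> :: real
  assume "\<delta> > 0"
  define d where "d = min (\<delta> / 2) (1 / 2)"
  have d: "0 < d" "d < \<delta>" "d \<le> 1 / 2"
    using \<open>\<delta> > 0\<close> by (auto simp: d_def)
  obtain x K where x: "x \<in> {\<phi> - d..\<phi> + d}" and "K > 0"
    and "\<And>n::int. K / (\<bar>of_int n\<bar> + 1) ^ 3 \<le> cmod (cis x - cis (of_int n * \<alpha>))"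
    using exists_badly_approximable_phase [of "\<phi> - d" "\<phi> + d" 3] d by auto
  then have "\<forall>\<^sub>F \<epsilon> in at_right 0. ln (1 / \<epsilon>) / 3 + ln (K / 8) / 3 < ln (real (gate_complexity \<alpha> \<epsilon> x))"
    using ln_gate_complexity_lower_bound [of \<alpha> 3 K x] assms(2) by simp
  moreover have "\<bar>x - \<phi>\<bar> < \<delta>"
    using x d by auto
  ultimately show "\<exists>\<phi>'. \<bar>\<phi>' - \<phi>\<bar> < \<delta> \<and>
           (\<exists>c::real. \<forall>\<^sub>F \<epsilon> in at_right 0.
              ln (real (gate_complexity \<alpha> \<epsilon> \<phi>')) > ln (1 / \<epsilon>) / 3 + c)"
    by blast
qed

end
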